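(* Let $X$ be a metric space, $\mathcal M=\{M_1,\dots,M_n\}\subset\mathcal P^f_{\mathrm{Cl}}(X)$, $\Sigma(\mathcal M)\neq\emptyset$ and $d=(d_1,\dots,d_n)\in\Omega(\mathcal M)$. Suppose that $d_i=\sup_{x\in M_i}|x\,K_d|$ for some index $i$. Then $d_i=\sup_{x\in M_i}|x\,K|$ for every $K\in\Sigma_d(\mathcal M)$.
   Context: For a metric space $X$, $p\in X$, $A\subset X$: $|p\,A|=\inf_{a\in A}|p\,a|$ ($=\infty$ if $A=\emptyset$); for $0\le r<\infty$, $B_r(A)=\{p:|p\,A|\le r\}$. For nonempty $A,B$, $d_H(A,B)=\max\{\sup_{a\in A}|a\,B|,\sup_{b\in B}|b\,A|\}\in[0,\infty]$. $\mathcal P_{\mathrm{Cl}}(X)$ is the set of nonempty closed subsets of $X$ with $d_H$. A finiteness class of $\mathcal P_{\mathrm{Cl}}(X)$ is an equivalence class of the relation $A\sim B\iff d_H(A,B)<\infty$; $\mathcal P^f_{\mathrm{Cl}}(X)$ denotes a fixed finiteness class. For finite $\mathcal M=\{M_1,\dots,M_n\}\subset\mathcal P^f_{\mathrm{Cl}}(X)$, set $S_{\mathcal M}(Y)=\sum_{i=1}^n d_H(Y,M_i)$ for $Y\in\mathcal P^f_{\mathrm{Cl}}(X)$; $\Sigma(\mathcal M)$ is the set of all minimizers of $S_{\mathcal M}$ over $\mathcal P^f_{\mathrm{Cl}}(X)$. For $K\in\Sigma(\mathcal M)$, $d(K)=(d_H(K,M_1),\dots,d_H(K,M_n))$; $\Omega(\mathcal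 M)=\{d(K):K\in\Sigma(\mathcal M)\}$; for $d=(d_1,\dots,d_n)\in\Omega(\mathcal M)$, $\Sigma_d(\mathcal M)=\{K\in\Sigma(\mathcal M):d(K)=d\}$, partially ordered by inclusion; and $K_d=\bigcap_{i=1}^n B_{d_i}(M_i)$. *)

theory Defs
  imports "HOL-Analysis.Analysis"
begin

text \<open>Distance from a point to a set, with value in the extended reals
  (infimum over the empty set is \<open>\<infinity>\<close>).\<close>
definition pdist :: "'a::metric_space \<Rightarrow> 'a set \<Rightarrow> ereal" where
  "pdist p A = (INF a\<in>A. ereal (dist p a))"

definition nbhd :: "ereal \<Rightarrow> 'a::metric_space set \<Rightarrow> 'a set" where
  "nbhd r A = {p. pdist p A \<le> r}"

definition hdist :: "'a::metric_space set \<Rightarrow> 'a set \<Rightarrow> ereal" where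
  "hdist A B = max (SUP a\<in>A. pdist a B) (SUP b\<in>B. pdist b A)"

definition PCl :: "'a::metric_space set set" where
  "PCl = {A. A \<noteq> {} \<and> closed A}"

definition fclass :: "'a::metric_space set \<Rightarrow> 'a set set" where
  "fclass A = {B \<in> PCl. hdist B A < \<infinity>}"

text \<open>The family \<open>M = {M_1,...,M_n}\<close> is represented by a list \<open>Ms\<close> (n = length Ms).\<close>
definition Ssum :: "'a::metric_space set list \<Rightarrow> 'a set \<Rightarrow> ereal" where
  "Ssum Ms Y = (\<Sum>i<length Ms. hdist Y (Ms ! i))"

text \<open>\<open>\<Sigma>(M)\<close> relative to the finiteness class \<open>C\<close>.\<close>
definition Sigma_min :: "'a::metric_space set set \<Rightarrow> 'a set list \<Rightarrow> 'a set set" where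
  "Sigma_min C Ms = {K \<in> C. \<forall>Y\<in>C. Ssum Ms K \<le> Ssum Ms Y}"

definition dvec :: "'a::metric_space set list \<Rightarrow> 'a set \<Rightarrow> ereal list" where
  "dvec Ms K = map (hdist K) Ms"

definition Omega :: "'a::metric_space set set \<Rightarrow> 'a set list \<Rightarrow> ereal list set" where
  "Omega C Ms = dvec Ms ` Sigma_min C Ms"

definition Sigma_d :: "'a::metric_space set set \<Rightarrow> 'a set list \<Rightarrow> ereal list \<Rightarrow> 'a set set" where
  "Sigma_d C Ms d = {K \<in> Sigma_min C Ms. dvec Ms K = d}"

definition Kd :: "'a::metric_space set list \<Rightarrow> ereal list \<Rightarrow> 'a set" where
  "Kd Ms d = (\<Inter>i<length Ms. nbhd (d ! i) (Ms ! i))"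

end

theory Submission
  imports Defs
begin

text \<open>Every \<open>K \<in> \<Sigma>_d(M)\<close> lies in \<open>K_d\<close>, because each point of \<open>K\<close> is within
  \<open>d_j = d_H(K, M_j)\<close> of \<open>M_j\<close>. Hence \<open>|x K| \<ge> |x K_d|\<close> for every \<open>x\<close>, which gives
  \<open>sup |x K| \<ge> d_i\<close> over \<open>x \<in> M_i\<close>; the reverse inequality is one half of
  \<open>d_H(K, M_i) = d_i\<close>. Only \<open>d(K) = d\<close> is used, not the minimality of \<open>K\<close>.\<close>

lemma pdist_antimono: "A \<subseteq> B \<Longrightarrow> pdist x B \<le> pdist x A"
  unfolding pdist_def by (rule INF_superset_mono) auto

lemma SUP_pdist_le_hdist: "(SUP b\<in>B. pdist b A) \<le> hdist A B"
  unfolding hdist_def by simp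

lemma pdist_le_hdist: "p \<in> A \<Longrightarrow> pdist p B \<le> hdist A B"
  unfolding hdist_def by (rule max.coboundedI1, rule SUP_upper)

lemma subset_Kd_dvec: "K \<subseteq> Kd Ms (dvec Ms K)"
  unfolding Kd_def nbhd_def dvec_def by (auto intro: pdist_le_hdist)

theorem mainTheorem15:
  fixes A0 :: "'a::metric_space set" and Ms :: "'a set list" and d :: "ereal list" and i :: nat
  assumes "A0 \<in> PCl"
    and "\<forall>M\<in>set Ms. M \<in> fclass A0"
    and "Sigma_min (fclass A0) Ms \<noteq> {}"
    and "d \<in> Omega (fclass A0) Ms"
    and "i < length Ms"
    and "d ! i = (SUP x\<in>Ms ! i. pdist x (Kd Ms d))"
  shows "\<forall>K\<in>Sigma_d (fclass A0) Ms d. d ! i = (SUP x\<in>Ms ! i. pdist x K)"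
proof
  fix K assume "K \<in> Sigma_d (fclass A0) Ms d"
  then have d_eq: "d = dvec Ms K"
    unfolding Sigma_d_def by simp
  have "d ! i \<le> (SUP x\<in>Ms ! i. pdist x K)"
    unfolding assms(6)
    by (rule SUP_mono) (use pdist_antimono[OF subset_Kd_dvec] d_eq in blast)
  moreover have "(SUP x\<in>Ms ! i. pdist x K) \<le> d ! i"
    using SUP_pdist_le_hdist assms(5) d_eq by (simp add: dvec_def)
  ultimately show "d ! i = (SUP x\<in>Ms ! i. pdist x K)"
    by (rule antisym)
qed

end
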